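(* (1) With $\mathbf a=v\mathbf c$, the function $$\tilde G(\mathbf a,v)=\sum_{k=1}^N\Big(a_k\big(\ln\tfrac{a_k}{v c_k^{\rm e}}-1+q_k\big)+vc_k^{\rm e}\Big)+A\Big(\ln\tfrac{A}{v}-1\Big),\qquad (\mathbf a,v)\in[0,\infty)^N\times(0,\infty)$$ (with $0\ln 0=0$) has positive definite Hessian at every point of $(0,\infty)^{N+1}$, and is convex. (2) Suppose $f(\phi_{\min})<0$ and let $(\mathbf c^*,v^*,\phi^* )$ be the unique steady state of the linear pump-leak system. Then $(\mathbf c^*,v^* )$ is the unique minimizer of $\tilde G(\mathbf c,v)=v\sum_k\big(c_k(\ln(c_k/c_k^{\rm e})-1+q_k)+c_k^{\rm e}\big)+A(\ln(A/v)-1)$ over the set $\overline{\mathcal S}=\{(\mathbf c,v)\in[0,\infty)^N\times(0,\infty):\sum_kz_kc_k+zA/v=0\}$.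
   Context: Fix an integer $N\ge2$, real valences $z_1,\dots,z_N$ not all zero, positive constants $c_k^{\rm e}$ with $\sum_kz_kc_k^{\rm e}=0$, $A>0$, $z\in\mathbb R$. Let $L$ be a real symmetric positive definite $N\times N$ matrix, $\mathbf p\in\mathbb R^N$ constant, $\zeta>0$, $\mathbf q=(q_k)=L^{-1}\mathbf p$, and $f(\phi)=\sum_kc_k^{\rm e}(\exp(-q_k-z_k\phi)-1)$, which has a unique minimizer $\phi_{\min}$ on $\mathbb R$. For $\mathbf c\in(0,\infty)^N$, $v>0$, $\phi\in\mathbb R$: $\mu_k=\ln(c_k/c_k^{\rm e})+z_k\phi$, $\pi_{\rm w}=\sum_kc_k^{\rm e}-(\sum_kc_k+A/v)$. The linear pump-leak system is $\frac{d}{dt}(v\mathbf c)=-L\boldsymbol\mu-\mathbf p$, $0=\sum_kz_kc_k+zA/v$, $\frac{dv}{dt}=-\zeta\pi_{\rm w}$; a steady state is a point $(\mathbf c,v,\phi)\in(0,\infty)^N\times(0,\infty)\times\mathbb R$ with the constraint holding, $L\boldsymbol\mu+\mathbf p=0$ and $\pi_{\rm w}=0$; when $f(\phi_{\min})<0$ it exists and is unique. *)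

theory Defs
  imports "HOL-Analysis.Analysis"
begin

text \<open>Species are indexed by a finite type 'n (N = CARD('n)); vectors in R^N are real^'n.\<close>

definition hessian_pos_def_at :: "('a::real_normed_vector \<Rightarrow> real) \<Rightarrow> 'a \<Rightarrow> bool" where
  "hessian_pos_def_at f x \<longleftrightarrow>
     (\<exists>Df :: 'a \<Rightarrow> ('a \<Rightarrow>\<^sub>L real). \<exists>D2f :: 'a \<Rightarrow> ('a \<Rightarrow>\<^sub>L real).
        (\<forall>\<^sub>F y in nhds x. (f has_derivative blinfun_apply (Df y)) (at y)) \<and>
        (Df has_derivative D2f) (at x) \<and>
        (\<forall>h. h \<noteq> 0 \<longrightarrow> blinfun_apply (D2f h) h > 0))"

definition Gt_a :: "real^'n \<Rightarrow> real^'n \<Rightarrow> real \<Rightarrow> ((real^'n) \<times> real) \<Rightarrow> real" where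
  "Gt_a ce q A av = (let a = fst av; v = snd av in
     (\<Sum>k\<in>UNIV. a$k * (ln (a$k / (v * ce$k)) - 1 + q$k) + v * ce$k) + A * (ln (A / v) - 1))"

definition Gt_c :: "real^'n \<Rightarrow> real^'n \<Rightarrow> real \<Rightarrow> real^'n \<Rightarrow> real \<Rightarrow> real" where
  "Gt_c ce q A c v =
     v * (\<Sum>k\<in>UNIV. c$k * (ln (c$k / ce$k) - 1 + q$k) + ce$k) + A * (ln (A / v) - 1)"

definition Sbar :: "real^'n \<Rightarrow> real \<Rightarrow> real \<Rightarrow> ((real^'n) \<times> real) set" where
  "Sbar zv z A = {(c, v). (\<forall>k. c$k \<ge> 0) \<and> v > 0 \<and> (\<Sum>k\<in>UNIV. zv$k * c$k) + z * A / v = 0}"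

definition mu :: "real^'n \<Rightarrow> real^'n \<Rightarrow> real^'n \<Rightarrow> real \<Rightarrow> real^'n" where
  "mu zv ce c phi = (\<chi> k. ln (c$k / ce$k) + zv$k * phi)"

definition pi_w :: "real^'n \<Rightarrow> real \<Rightarrow> real^'n \<Rightarrow> real \<Rightarrow> real" where
  "pi_w ce A c v = (\<Sum>k\<in>UNIV. ce$k) - ((\<Sum>k\<in>UNIV. c$k) + A / v)"

definition steady_state ::
  "real^'n \<Rightarrow> real^'n \<Rightarrow> real \<Rightarrow> real \<Rightarrow> real^'n^'n \<Rightarrow> real^'n \<Rightarrow> real^'n \<Rightarrow> real \<Rightarrow> real \<Rightarrow> bool" where
  "steady_state zv ce A z L p c v phi \<longleftrightarrow>
     (\<forall>k. c$k > 0) \<and> v > 0 \<and>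
     (\<Sum>k\<in>UNIV. zv$k * c$k) + z * A / v = 0 \<and>
     L *v mu zv ce c phi + p = 0 \<and>
     pi_w ce A c v = 0"

definition f_fun :: "real^'n \<Rightarrow> real^'n \<Rightarrow> real^'n \<Rightarrow> real \<Rightarrow> real" where
  "f_fun zv ce q phi = (\<Sum>k\<in>UNIV. ce$k * (exp (- q$k - zv$k * phi) - 1))"

end

theory Submission
  imports Defs
begin

(* Both parts rest on the scalar relative entropy x ln(x/y) - x + y, which is nonnegative and
   vanishes only for x = y.

   (1) In the variables (a, v) = (v c, v) the energy G tilde is a sum of perspective functions
   (x, w) \<mapsto> x ln(x/w) plus affine terms. Joint convexity of the perspective follows from the
   tangent-plane bound, and gives convexity of G tilde on [0,\<infinity>)^N \<times> (0,\<infinity>). For the Hessian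
   we compute the gradient and its derivative explicitly and observe that the Hessian quadratic
   form is \<Sum>_k a_k (h_k/a_k - t/v)\<^sup>2 + A (t/v)\<^sup>2, which is positive for h \<noteq> 0.

   (2) At a steady state, positive definiteness of L gives \<mu> = -q, i.e. chemical equilibrium,
   and \<pi>_w = 0 gives osmotic balance. Using these and electroneutrality, on the constraint set
   G(c, v) - G(c_s, v_s) = v \<Sum>_k RE(c_k, c_s_k) + (A/v_s) RE(v_s, v) with RE the relative entropy,
   which is strictly positive unless (c, v) = (c_s, v_s). *)

(* The scalar relative entropy x ln(x/y) - x + y (with 0 ln 0 = 0); every inequality below
   reduces to its nonnegativity. *)
definition rel_entropy :: "real \<Rightarrow> real \<Rightarrow> real" where
  "rel_entropy x y = x * ln (x / y) - x + y"

lemma rel_entropy_self [simp]: "rel_entropy y y = 0"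
  by (cases "y = 0") (simp_all add: rel_entropy_def)

(* Strict positivity away from the diagonal: the strict form of ln t < t - 1 for t \<noteq> 1. *)
lemma rel_entropy_pos:
  fixes x y :: real
  assumes "x \<ge> 0" "y > 0" "x \<noteq> y"
  shows "rel_entropy x y > 0"
proof (cases "x = 0")
  case True
  then show ?thesis using assms by (simp add: rel_entropy_def)
next
  case False
  then have x: "x > 0" using assms by simp
  have "ln y - ln x < (y - x) / x" using ln_diff_less x assms by simp
  then have "x * (ln y - ln x) < y - x" using x by (simp add: field_simps)
  then show ?thesis using x assms by (simp add: rel_entropy_def ln_div algebra_simps)
qed

lemma rel_entropy_nonneg:
  fixes x y :: real
  assumes "x \<ge> 0" "y > 0"
  shows "rel_entropy x y \<ge> 0"
  using rel_entropy_pos[OF assms] by (cases "x = y") auto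

lemma xlnx_tangent:
  fixes x w m W :: real
  assumes "x \<ge> 0" "w > 0" "m > 0" "W > 0"
  shows "x * ln (x / w) \<ge> x * ln (m / W) + x - m * w / W"
proof -
  have "x * ln (x / (w * m / W)) = x * ln (x / w) - x * ln (m / W)"
  proof (cases "x = 0")
    case False
    then show ?thesis using assms by (simp add: ln_div ln_mult algebra_simps)
  qed simp
  then have "rel_entropy x (w * m / W) = x * ln (x / w) - (x * ln (m / W) + x - m * w / W)"
    by (simp add: rel_entropy_def)
  moreover have "rel_entropy x (w * m / W) \<ge> 0"
    by (rule rel_entropy_nonneg) (use assms in auto)
  ultimately show ?thesis by simp
qed

(* Joint convexity of the perspective function (x, w) \<mapsto> x ln(x/w) on [0,\<infinity>) \<times> (0,\<infinity>):
   both endpoints lie above the tangent plane at their convex combination. *)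
lemma perspective_xlnx_convex:
  fixes a b w1 w2 u t :: real
  assumes "a \<ge> 0" "b \<ge> 0" "w1 > 0" "w2 > 0" "u \<ge> 0" "t \<ge> 0" "u + t = 1"
  shows "(u*a + t*b) * ln ((u*a + t*b) / (u*w1 + t*w2)) \<le> u * (a * ln (a/w1)) + t * (b * ln (b/w2))"
proof -
  define m where "m = u*a + t*b"
  define W where "W = u*w1 + t*w2"
  have W: "W > 0"
    unfolding W_def using assms by (smt (verit) mult_pos_pos mult_nonneg_nonneg)
  show ?thesis
  proof (cases "m = 0")
    case True
    then have "u*a = 0" "t*b = 0" unfolding m_def using assms
      by (smt (verit) mult_nonneg_nonneg)+
    then have "u * (a * ln (a/w1)) = 0" "t * (b * ln (b/w2)) = 0"
      by (metis mult.assoc mult_zero_left)+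
    moreover have "(u*a + t*b) * ln ((u*a + t*b) / (u*w1 + t*w2)) = 0"
      using True unfolding m_def by simp
    ultimately show ?thesis by linarith
  next
    case False
    then have m: "m > 0" unfolding m_def using assms by (simp add: add_nonneg_nonneg order_less_le)
    have "m * ln (m/W) = m * ln (m/W) + m - m * W / W" using W by simp
    also have "\<dots> = u * (a * ln (m/W) + a - m * w1 / W) + t * (b * ln (m/W) + b - m * w2 / W)"
      unfolding m_def W_def by (simp add: algebra_simps add_divide_distrib)
    also have "\<dots> \<le> u * (a * ln (a/w1)) + t * (b * ln (b/w2))"
      using xlnx_tangent[of a w1 m W] xlnx_tangent[of b w2 m W] assms m W
      by (intro add_mono mult_left_mono) auto
    finally show ?thesis unfolding m_def W_def .
  qed
qed

lemma Gt_a_Pair: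
  "Gt_a ce q A (a, v) = (\<Sum>k\<in>UNIV. a$k * (ln (a$k / (v * ce$k)) - 1 + q$k) + v * ce$k) + A * (ln (A / v) - 1)"
  by (simp add: Gt_a_def)

(* Each species term a_k (ln(a_k/(v c_k^e)) - 1 + q_k) + v c_k^e is jointly convex in (a_k, v):
   a perspective term plus an affine part. *)
lemma species_term_convex:
  fixes x1 x2 w1 w2 c qk u t :: real
  assumes "x1 \<ge> 0" "x2 \<ge> 0" "w1 > 0" "w2 > 0" "c > 0" "u \<ge> 0" "t \<ge> 0" "u + t = 1"
  shows "(u*x1 + t*x2) * (ln ((u*x1 + t*x2) / ((u*w1 + t*w2) * c)) - 1 + qk) + (u*w1 + t*w2) * c
    \<le> u * (x1 * (ln (x1 / (w1 * c)) - 1 + qk) + w1 * c) + t * (x2 * (ln (x2 / (w2 * c)) - 1 + qk) + w2 * c)"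
proof -
  have "(u*x1 + t*x2) * ln ((u*x1 + t*x2) / (u*(w1*c) + t*(w2*c)))
      \<le> u * (x1 * ln (x1 / (w1*c))) + t * (x2 * ln (x2 / (w2*c)))"
    by (rule perspective_xlnx_convex) (use assms in auto)
  moreover have "u*(w1*c) + t*(w2*c) = (u*w1 + t*w2) * c" by (simp add: algebra_simps)
  ultimately show ?thesis by (simp add: algebra_simps)
qed

(* The impermeant term A (ln(A/v) - 1) is convex in v (perspective with constant numerator). *)
lemma volume_term_convex:
  fixes A w1 w2 u t :: real
  assumes "A > 0" "w1 > 0" "w2 > 0" "u \<ge> 0" "t \<ge> 0" "u + t = 1"
  shows "A * (ln (A / (u*w1 + t*w2)) - 1) \<le> u * (A * (ln (A / w1) - 1)) + t * (A * (ln (A / w2) - 1))"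
proof -
  have "(u*A + t*A) * ln ((u*A + t*A) / (u*w1 + t*w2)) \<le> u * (A * ln (A/w1)) + t * (A * ln (A/w2))"
    by (rule perspective_xlnx_convex) (use assms in auto)
  moreover have "u*A + t*A = A" using assms(6) by (metis distrib_right mult_1)
  moreover have "u * (A * (ln (A / w1) - 1)) + t * (A * (ln (A / w2) - 1))
      = u * (A * ln (A/w1)) + t * (A * ln (A/w2)) - (u*A + t*A)"
    by (simp add: algebra_simps)
  ultimately show ?thesis by (simp add: right_diff_distrib)
qed

lemma convex_orthant_times_halfline: "convex {(a::real^'n, v::real). (\<forall>k. a$k \<ge> 0) \<and> v > 0}"
proof -
  have "{(a::real^'n, v::real). (\<forall>k. a$k \<ge> 0) \<and> v > 0} = {a. \<forall>k. a$k \<ge> 0} \<times> {0<..}"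
    by auto
  moreover have "convex {a::real^'n. \<forall>k. a$k \<ge> 0}"
    by (auto simp: convex_def)
  ultimately show ?thesis by (simp add: convex_Times)
qed

lemma Gt_a_convex:
  fixes ce q :: "real^'n" and A :: real
  assumes ce_pos: "\<forall>k. ce$k > 0" and A_pos: "A > 0"
  shows "convex_on {(a, v). (\<forall>k. a$k \<ge> 0) \<and> v > 0} (Gt_a ce q A)"
  unfolding convex_on_def
proof (intro conjI ballI allI impI convex_orthant_times_halfline)
  fix x y :: "(real^'n) \<times> real" and u t :: real
  assume x: "x \<in> {(a, v). (\<forall>k. a$k \<ge> 0) \<and> v > 0}" and y: "y \<in> {(a, v). (\<forall>k. a$k \<ge> 0) \<and> v > 0}"
    and u: "0 \<le> u" and t: "0 \<le> t" and ut: "u + t = 1"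
  obtain a1 v1 a2 v2 where xy: "x = (a1, v1)" "y = (a2, v2)" by (cases x, cases y)
  have a: "\<forall>k. a1$k \<ge> 0" "\<forall>k. a2$k \<ge> 0" and v: "v1 > 0" "v2 > 0" using x y xy by auto
  have "(\<Sum>k\<in>UNIV. (u*a1$k + t*a2$k) * (ln ((u*a1$k + t*a2$k) / ((u * v1 + t * v2) * ce$k)) - 1 + q$k)
            + (u * v1 + t * v2) * ce$k)
      \<le> (\<Sum>k\<in>UNIV. u * (a1$k * (ln (a1$k / (v1 * ce$k)) - 1 + q$k) + v1 * ce$k)
            + t * (a2$k * (ln (a2$k / (v2 * ce$k)) - 1 + q$k) + v2 * ce$k))" (is "?S \<le> ?T")
    using a v ce_pos u t ut by (intro sum_mono species_term_convex) auto
  moreover have "A * (ln (A / (u * v1 + t * v2)) - 1) \<le> u * (A * (ln (A / v1) - 1)) + t * (A * (ln (A / v2) - 1))"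
    using A_pos v u t ut by (rule volume_term_convex)
  moreover have "Gt_a ce q A (u *\<^sub>R x + t *\<^sub>R y) = ?S + A * (ln (A / (u * v1 + t * v2)) - 1)"
    unfolding xy by (simp add: Gt_a_Pair)
  moreover have "u * Gt_a ce q A x + t * Gt_a ce q A y
      = ?T + (u * (A * (ln (A / v1) - 1)) + t * (A * (ln (A / v2) - 1)))"
    unfolding xy Gt_a_Pair by (simp add: sum.distrib sum_distrib_left distrib_left)
  ultimately show "Gt_a ce q A (u *\<^sub>R x + t *\<^sub>R y) \<le> u * Gt_a ce q A x + t * Gt_a ce q A y"
    by linarith
qed

(* The gradient of G tilde at a positive point y = (a, v): the a_k-component is
   ln(a_k/(v c_k^e)) + q_k, written with the logarithm split so it can be differentiated again;
   the v-component is the (negated) osmotic pressure \<Sum>c_k^e - (\<Sum>a_k + A)/v. *)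
definition Gt_a_grad :: "real^'n \<Rightarrow> real^'n \<Rightarrow> real \<Rightarrow> ((real^'n) \<times> real) \<Rightarrow> ((real^'n) \<times> real)" where
  "Gt_a_grad ce q A y =
     ((\<chi> k. ln (fst y $ k) - ln (snd y) - ln (ce$k) + q$k),
      (\<Sum>k\<in>UNIV. ce$k) - ((\<Sum>k\<in>UNIV. fst y $ k) + A) / snd y)"

definition Gt_a_hess :: "real \<Rightarrow> ((real^'n) \<times> real) \<Rightarrow> ((real^'n) \<times> real) \<Rightarrow> ((real^'n) \<times> real)" where
  "Gt_a_hess A y h =
     ((\<chi> k. fst h $ k / fst y $ k - snd h / snd y),
      ((\<Sum>k\<in>UNIV. fst y $ k) + A) * snd h / (snd y)\<^sup>2 - (\<Sum>k\<in>UNIV. fst h $ k) / snd y)"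

lemma has_derivative_vec_lambda:
  fixes f f' :: "'i::finite \<Rightarrow> 'a::real_normed_vector \<Rightarrow> real"
  assumes "\<And>i. (f i has_derivative f' i) F"
  shows "((\<lambda>x. \<chi> i. f i x) has_derivative (\<lambda>h. \<chi> i. f' i h)) F"
proof -
  have vec_as_sum: "(\<chi> i. c i) = (\<Sum>i\<in>UNIV. c i *\<^sub>R axis i (1::real))" for c :: "'i \<Rightarrow> real"
    by (simp add: vec_eq_iff axis_def if_distrib cong: if_cong)
  show ?thesis
    unfolding vec_as_sum
    by (intro has_derivative_sum has_derivative_scaleR_left assms)
qed

lemma has_derivative_coord:
  "((\<lambda>y::(real^'n) \<times> real. fst y $ k) has_derivative (\<lambda>h. fst h $ k)) F"
  by (rule bounded_linear_imp_has_derivative)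
    (rule bounded_linear_compose[OF bounded_linear_vec_nth bounded_linear_fst])

lemma Gt_a_has_derivative:
  fixes ce q :: "real^'n" and A :: real and y :: "(real^'n) \<times> real"
  assumes ce_pos: "\<forall>k. ce$k > 0" and A_pos: "A > 0" and a: "\<forall>k. fst y $ k > 0" and v: "snd y > 0"
  shows "(Gt_a ce q A has_derivative (\<lambda>h. h \<bullet> Gt_a_grad ce q A y)) (at y)"
proof -
  have species: "((\<lambda>x. fst x $ k * (ln (fst x $ k / (snd x * ce$k)) - 1 + q$k) + snd x * ce$k)
      has_derivative (\<lambda>h. (ln (fst y $ k) - ln (snd y) - ln (ce$k) + q$k) * fst h $ k
                          + (ce$k - fst y $ k / snd y) * snd h)) (at y)" for k
  proof -
    have ak: "fst y $ k > 0" and ck: "ce$k > 0" using a ce_pos by auto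
    then have denom_nz: "snd y * ce$k \<noteq> 0" and ratio_pos: "fst y $ k / (snd y * ce$k) > 0"
      using v by auto
    have split_ln: "ln (fst y $ k / (snd y * ce$k)) = ln (fst y $ k) - ln (snd y) - ln (ce$k)"
      using ak ck v by (simp add: ln_div ln_mult)
    show ?thesis
      apply (rule has_derivative_eq_rhs)
       apply (rule derivative_eq_intros has_derivative_coord refl
           | (use denom_nz ratio_pos in \<open>simp; fail\<close>))+
      using ak ck v unfolding split_ln by (simp add: fun_eq_iff field_simps)
  qed
  have volume: "((\<lambda>x. A * (ln (A / snd x) - 1)) has_derivative (\<lambda>h. - A / snd y * snd h)) (at y)"
    apply (rule has_derivative_eq_rhs)
     apply (rule derivative_eq_intros refl | (use v A_pos in \<open>simp; fail\<close>))+
    using v A_pos by (simp add: fun_eq_iff field_simps)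
  have Gt_eq: "Gt_a ce q A = (\<lambda>x. (\<Sum>k\<in>UNIV. fst x $ k * (ln (fst x $ k / (snd x * ce$k)) - 1 + q$k) + snd x * ce$k)
         + A * (ln (A / snd x) - 1))"
    by (simp add: fun_eq_iff Gt_a_def)
  have grad_eq: "(\<lambda>h. (\<Sum>k\<in>UNIV. (ln (fst y $ k) - ln (snd y) - ln (ce$k) + q$k) * fst h $ k
                          + (ce$k - fst y $ k / snd y) * snd h) + - A / snd y * snd h)
      = (\<lambda>h. h \<bullet> Gt_a_grad ce q A y)"
    by (simp add: fun_eq_iff Gt_a_grad_def inner_prod_def inner_vec_def sum.distrib sum_distrib_right
        sum_distrib_left sum_subtractf sum_divide_distrib add_divide_distrib left_diff_distrib algebra_simps)
  have "((\<lambda>x. (\<Sum>k\<in>UNIV. fst x $ k * (ln (fst x $ k / (snd x * ce$k)) - 1 + q$k) + snd x * ce$k)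
         + A * (ln (A / snd x) - 1)) has_derivative
      (\<lambda>h. (\<Sum>k\<in>UNIV. (ln (fst y $ k) - ln (snd y) - ln (ce$k) + q$k) * fst h $ k
                          + (ce$k - fst y $ k / snd y) * snd h) + - A / snd y * snd h)) (at y)"
    by (intro has_derivative_add has_derivative_sum species volume)
  then show ?thesis unfolding Gt_eq grad_eq .
qed

lemma Gt_a_grad_has_derivative:
  fixes ce q :: "real^'n" and A :: real and y :: "(real^'n) \<times> real"
  assumes a: "\<forall>k. fst y $ k > 0" and v: "snd y > 0"
  shows "(Gt_a_grad ce q A has_derivative Gt_a_hess A y) (at y)"
proof -
  have species: "((\<lambda>x. ln (fst x $ k) - ln (snd x) - ln (ce$k) + q$k)
      has_derivative (\<lambda>h. fst h $ k / fst y $ k - snd h / snd y)) (at y)" for k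
  proof -
    have ak: "fst y $ k > 0" using a by auto
    show ?thesis
      apply (rule has_derivative_eq_rhs)
       apply (rule derivative_eq_intros has_derivative_coord refl | (use ak v in \<open>simp; fail\<close>))+
      using ak v by (simp add: fun_eq_iff field_simps)
  qed
  have volume: "((\<lambda>x. (\<Sum>k\<in>UNIV. ce$k) - ((\<Sum>k\<in>UNIV. fst x $ k) + A) / snd x)
      has_derivative (\<lambda>h. ((\<Sum>k\<in>UNIV. fst y $ k) + A) * snd h / (snd y)\<^sup>2
                          - (\<Sum>k\<in>UNIV. fst h $ k) / snd y)) (at y)"
    apply (rule has_derivative_eq_rhs)
     apply (rule derivative_eq_intros has_derivative_coord refl | (use v in \<open>simp; fail\<close>))+
    using v by (simp add: fun_eq_iff field_simps power2_eq_square)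
  show ?thesis
    unfolding Gt_a_grad_def[abs_def] Gt_a_hess_def
    by (intro has_derivative_Pair has_derivative_vec_lambda species volume)
qed

lemma Gt_a_hess_quadratic_form:
  fixes A :: real and y h :: "(real^'n) \<times> real"
  assumes a: "\<forall>k. fst y $ k > 0" and v: "snd y > 0"
  shows "h \<bullet> Gt_a_hess A y h
    = (\<Sum>k\<in>UNIV. fst y $ k * (fst h $ k / fst y $ k - snd h / snd y)\<^sup>2) + A * (snd h / snd y)\<^sup>2"
proof -
  have square: "fst y $ k * (fst h $ k / fst y $ k - snd h / snd y)\<^sup>2
      = fst h $ k * (fst h $ k / fst y $ k - snd h / snd y) - fst h $ k * snd h / snd y
        + fst y $ k * (snd h / snd y)\<^sup>2" for k
    using a[rule_format, of k] v by (simp add: field_simps power2_eq_square)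
  have "(\<Sum>k\<in>UNIV. fst y $ k * (fst h $ k / fst y $ k - snd h / snd y)\<^sup>2)
      = (\<Sum>k\<in>UNIV. fst h $ k * (fst h $ k / fst y $ k - snd h / snd y))
        - (\<Sum>k\<in>UNIV. fst h $ k) * snd h / snd y + (\<Sum>k\<in>UNIV. fst y $ k) * (snd h / snd y)\<^sup>2"
    unfolding square by (simp add: sum.distrib sum_subtractf sum_distrib_right sum_divide_distrib)
  moreover have "((\<Sum>k\<in>UNIV. fst y $ k) + A) * snd h / (snd y)\<^sup>2 * snd h
      = (\<Sum>k\<in>UNIV. fst y $ k) * (snd h / snd y)\<^sup>2 + A * (snd h / snd y)\<^sup>2"
    by (simp add: power_divide add_divide_distrib power2_eq_square algebra_simps)
  ultimately show ?thesis
    by (simp add: Gt_a_hess_def inner_prod_def inner_vec_def algebra_simps)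
qed

(* Positive definiteness: if t \<noteq> 0 the last square is positive, otherwise some h_k \<noteq> 0 and
   its square is positive. *)
lemma Gt_a_hess_pos_def:
  fixes A :: real and y h :: "(real^'n) \<times> real"
  assumes A_pos: "A > 0" and a: "\<forall>k. fst y $ k > 0" and v: "snd y > 0" and h: "h \<noteq> 0"
  shows "h \<bullet> Gt_a_hess A y h > 0"
proof -
  define S where "S = (\<Sum>k\<in>UNIV. fst y $ k * (fst h $ k / fst y $ k - snd h / snd y)\<^sup>2)"
  have terms_nonneg: "fst y $ k * (fst h $ k / fst y $ k - snd h / snd y)\<^sup>2 \<ge> 0" for k
    using a[rule_format, of k] by simp
  then have S_nonneg: "S \<ge> 0" unfolding S_def by (simp add: sum_nonneg)
  have "S + A * (snd h / snd y)\<^sup>2 > 0"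
  proof (cases "snd h = 0")
    case False
    then show ?thesis using S_nonneg A_pos v by (simp add: add_nonneg_pos)
  next
    case True
    then obtain k where k: "fst h $ k \<noteq> 0"
      using h by (metis prod.collapse vec_eq_iff zero_index zero_prod_def)
    have "0 < fst y $ k * (fst h $ k / fst y $ k - snd h / snd y)\<^sup>2"
      using a[rule_format, of k] k True by simp
    also have "\<dots> \<le> S"
      unfolding S_def by (rule member_le_sum) (use terms_nonneg in auto)
    finally show ?thesis using True by simp
  qed
  then show ?thesis using Gt_a_hess_quadratic_form[OF a v] unfolding S_def by simp
qed

lemma eventually_positive_nhds:
  fixes y :: "(real^'n) \<times> real"
  assumes a: "\<forall>k. fst y $ k > 0" and v: "snd y > 0"
  shows "\<forall>\<^sub>F x in nhds y. (\<forall>k. fst x $ k > 0) \<and> snd x > 0"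
proof -
  have "\<forall>\<^sub>F x in nhds y. fst x $ k > 0" for k
    using order_tendstoD(1)[OF tendsto_vec_nth[OF tendsto_fst[OF filterlim_ident]]] a by blast
  then have "\<forall>\<^sub>F x in nhds y. \<forall>k. fst x $ k > 0" by (simp add: eventually_all_finite)
  moreover have "\<forall>\<^sub>F x in nhds y. snd x > 0"
    using order_tendstoD(1)[OF tendsto_snd[OF filterlim_ident]] v by blast
  ultimately show ?thesis by (rule eventually_conj)
qed

(* Part (1), Hessian: the gradient and Hessian above, packaged as bounded linear functionals
   via the inner product, witness hessian_pos_def_at. *)
lemma Gt_a_hessian_pos_def:
  fixes ce q a :: "real^'n" and A v :: real
  assumes ce_pos: "\<forall>k. ce$k > 0" and A_pos: "A > 0" and a: "\<forall>k. a$k > 0" and v: "v > 0"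
  shows "hessian_pos_def_at (Gt_a ce q A) (a, v)"
  unfolding hessian_pos_def_at_def
proof (intro exI conjI allI impI)
  show "\<forall>\<^sub>F x in nhds (a, v). (Gt_a ce q A has_derivative
      blinfun_apply (blinfun_inner_left (Gt_a_grad ce q A x))) (at x)"
    using eventually_positive_nhds[of "(a, v)"] a v
    by (auto elim!: eventually_mono intro: Gt_a_has_derivative[OF ce_pos A_pos])
  show "((\<lambda>x. blinfun_inner_left (Gt_a_grad ce q A x)) has_derivative
      (\<lambda>h. blinfun_inner_left (Gt_a_hess A (a, v) h))) (at (a, v))"
    using a v by (intro bounded_linear.has_derivative[OF bounded_linear_blinfun_inner_left]
        Gt_a_grad_has_derivative) auto
  show "blinfun_apply (blinfun_inner_left (Gt_a_hess A (a, v) h)) h > 0" if "h \<noteq> 0" for h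
    using Gt_a_hess_pos_def[OF A_pos _ _ that] a v by simp
qed

lemma matrix_inv_left:
  fixes L :: "'a::field^'n^'n"
  assumes "invertible L"
  shows "matrix_inv L ** L = mat 1"
  using someI_ex[OF assms[unfolded invertible_def]] unfolding matrix_inv_def by blast

(* A positive definite matrix has trivial kernel and is therefore invertible. *)
lemma pos_def_invertible:
  fixes L :: "real^'n^'n"
  assumes L_pd: "\<forall>x. x \<noteq> 0 \<longrightarrow> x \<bullet> (L *v x) > 0"
  shows "invertible L"
proof -
  have "\<forall>x. L *v x = 0 \<longrightarrow> x = 0" using L_pd by force
  then show ?thesis by (simp add: invertible_left_inverse matrix_left_invertible_ker)
qed

(* The linear flux condition L m + p = 0 forces m = -L\<^sup>-\<^sup>1 p, i.e. \<mu> = -q at a steady state. *)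
lemma pos_def_solve:
  fixes L :: "real^'n^'n" and m p :: "real^'n"
  assumes L_pd: "\<forall>x. x \<noteq> 0 \<longrightarrow> x \<bullet> (L *v x) > 0" and eq: "L *v m + p = 0"
  shows "m = - (matrix_inv L *v p)"
proof -
  have "m = matrix_inv L *v (L *v m)"
    by (simp add: matrix_vector_mul_assoc matrix_inv_left[OF pos_def_invertible[OF L_pd]])
  also have "L *v m = - p" using eq by (simp add: eq_neg_iff_add_eq_0)
  finally show ?thesis by (simp add: matrix_vector_mult_def vec_eq_iff sum_negf)
qed

(* On the constraint set, G tilde is a relative entropy up to terms depending on v only.
   The hypotheses are the steady-state equations: chemical equilibrium
   ln(c_s_k/c_k^e) + q_k = -z_k \<phi>_s and osmotic balance \<Sum>c_k^e - \<Sum>c_s_k = A/v_s.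
   Electroneutrality turns the term \<phi>_s \<Sum>z_k c_k into \<phi>_s z A / v. *)
lemma Gt_c_on_Sbar:
  fixes zv ce q cs c :: "real^'n" and A z vs phis v :: real
  assumes ce_pos: "\<forall>k. ce$k > 0" and cs_pos: "\<forall>k. cs$k > 0"
    and chem: "\<And>k. ln (cs$k / ce$k) + q$k = - zv$k * phis"
    and osm: "(\<Sum>k\<in>UNIV. ce$k) - (\<Sum>k\<in>UNIV. cs$k) = A / vs"
    and cv: "(c, v) \<in> Sbar zv z A"
  shows "Gt_c ce q A c v
    = v * (\<Sum>k\<in>UNIV. rel_entropy (c$k) (cs$k)) + phis * z * A + A * v / vs + A * (ln (A / v) - 1)"
proof -
  have c: "\<forall>k. c$k \<ge> 0" and v: "v > 0" and neutral: "(\<Sum>k\<in>UNIV. zv$k * c$k) + z * A / v = 0"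
    using cv unfolding Sbar_def by auto
  have species: "c$k * (ln (c$k / ce$k) - 1 + q$k) + ce$k
      = rel_entropy (c$k) (cs$k) - phis * (zv$k * c$k) + (ce$k - cs$k)" for k
  proof -
    have "c$k * ln (c$k / ce$k) = c$k * ln (c$k / cs$k) + c$k * ln (cs$k / ce$k)"
    proof (cases "c$k = 0")
      case False
      then have "c$k > 0" using c by (simp add: order_less_le)
      then show ?thesis using cs_pos[rule_format, of k] ce_pos[rule_format, of k]
        by (simp add: ln_div distrib_left[symmetric])
    qed simp
    moreover have "c$k * (ln (cs$k / ce$k) + q$k) = c$k * (- zv$k * phis)" using chem[of k] by simp
    ultimately show ?thesis unfolding rel_entropy_def by (simp add: algebra_simps)
  qed
  have "(\<Sum>k\<in>UNIV. c$k * (ln (c$k / ce$k) - 1 + q$k) + ce$k)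
      = (\<Sum>k\<in>UNIV. rel_entropy (c$k) (cs$k)) - phis * (\<Sum>k\<in>UNIV. zv$k * c$k) + A / vs"
    unfolding species using osm by (simp add: sum.distrib sum_subtractf sum_distrib_left)
  also have "\<dots> = (\<Sum>k\<in>UNIV. rel_entropy (c$k) (cs$k)) + phis * z * A / v + A / vs"
    using neutral by (simp add: eq_neg_iff_add_eq_0[symmetric])
  finally show ?thesis unfolding Gt_c_def using v by (simp add: algebra_simps)
qed

lemma Gt_c_excess:
  fixes zv ce q cs c :: "real^'n" and A z vs phis v :: real
  assumes ce_pos: "\<forall>k. ce$k > 0" and A_pos: "A > 0" and cs_pos: "\<forall>k. cs$k > 0"
    and chem: "\<And>k. ln (cs$k / ce$k) + q$k = - zv$k * phis"
    and osm: "(\<Sum>k\<in>UNIV. ce$k) - (\<Sum>k\<in>UNIV. cs$k) = A / vs"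
    and cs_in: "(cs, vs) \<in> Sbar zv z A" and cv: "(c, v) \<in> Sbar zv z A"
  shows "Gt_c ce q A c v - Gt_c ce q A cs vs
    = v * (\<Sum>k\<in>UNIV. rel_entropy (c$k) (cs$k)) + A / vs * rel_entropy vs v"
proof -
  have v: "v > 0" and vs: "vs > 0" using cv cs_in unfolding Sbar_def by auto
  have "A / vs * rel_entropy vs v = A * (ln (A / v) - ln (A / vs)) + A * v / vs - A"
    using A_pos v vs by (simp add: rel_entropy_def ln_div field_simps)
  then show ?thesis
    using Gt_c_on_Sbar[OF ce_pos cs_pos chem osm cv] Gt_c_on_Sbar[OF ce_pos cs_pos chem osm cs_in] vs
    by (simp add: algebra_simps)
qed

(* The excess is strictly positive at every other point of the constraint set: if v = v_s then
   some c_k \<noteq> c_s_k, otherwise the volume term is positive. *)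
lemma Gt_c_strict_min:
  fixes zv ce q cs c :: "real^'n" and A z vs phis v :: real
  assumes ce_pos: "\<forall>k. ce$k > 0" and A_pos: "A > 0" and cs_pos: "\<forall>k. cs$k > 0"
    and chem: "\<And>k. ln (cs$k / ce$k) + q$k = - zv$k * phis"
    and osm: "(\<Sum>k\<in>UNIV. ce$k) - (\<Sum>k\<in>UNIV. cs$k) = A / vs"
    and cs_in: "(cs, vs) \<in> Sbar zv z A" and cv: "(c, v) \<in> Sbar zv z A" and ne: "(c, v) \<noteq> (cs, vs)"
  shows "Gt_c ce q A cs vs < Gt_c ce q A c v"
proof -
  have c: "\<forall>k. c$k \<ge> 0" and v: "v > 0" and vs: "vs > 0" using cv cs_in unfolding Sbar_def by auto
  have terms_nonneg: "rel_entropy (c$k) (cs$k) \<ge> 0" for k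
    using rel_entropy_nonneg c cs_pos by auto
  have "v * (\<Sum>k\<in>UNIV. rel_entropy (c$k) (cs$k)) + A / vs * rel_entropy vs v > 0"
  proof (cases "v = vs")
    case True
    then obtain k where k: "c$k \<noteq> cs$k" using ne by (auto simp: vec_eq_iff)
    have "0 < rel_entropy (c$k) (cs$k)" using rel_entropy_pos k c cs_pos by auto
    also have "\<dots> \<le> (\<Sum>k\<in>UNIV. rel_entropy (c$k) (cs$k))"
      by (rule member_le_sum) (use terms_nonneg in auto)
    finally show ?thesis using True vs by simp
  next
    case False
    then have "rel_entropy vs v > 0" using rel_entropy_pos vs v by auto
    moreover have "(\<Sum>k\<in>UNIV. rel_entropy (c$k) (cs$k)) \<ge> 0" by (simp add: sum_nonneg terms_nonneg)
    ultimately show ?thesis using v vs A_pos by (simp add: add_nonneg_pos)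
  qed
  then show ?thesis using Gt_c_excess[OF ce_pos A_pos cs_pos chem osm cs_in cv] by linarith
qed


lemma steady_state_equilibrium:
  fixes zv ce p cs :: "real^'n" and L :: "real^'n^'n" and A z vs phis :: real
  assumes L_pd: "\<forall>x. x \<noteq> 0 \<longrightarrow> x \<bullet> (L *v x) > 0"
    and ss: "steady_state zv ce A z L p cs vs phis"
  shows "\<forall>k. cs$k > 0" and "(cs, vs) \<in> Sbar zv z A"
    and "\<And>k. ln (cs$k / ce$k) + (matrix_inv L *v p)$k = - zv$k * phis"
    and "(\<Sum>k\<in>UNIV. ce$k) - (\<Sum>k\<in>UNIV. cs$k) = A / vs"
proof -
  show cs_pos: "\<forall>k. cs$k > 0" using ss unfolding steady_state_def by blast
  then show "(cs, vs) \<in> Sbar zv z A"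
    using ss unfolding steady_state_def Sbar_def by (auto intro: less_imp_le)
  have "mu zv ce cs phis = - (matrix_inv L *v p)"
    using pos_def_solve[OF L_pd] ss unfolding steady_state_def by blast
  then have "mu zv ce cs phis $ k = - (matrix_inv L *v p) $ k" for k by simp
  then show "ln (cs$k / ce$k) + (matrix_inv L *v p)$k = - zv$k * phis" for k
    unfolding mu_def by (simp add: eq_neg_iff_add_eq_0 algebra_simps)
  show "(\<Sum>k\<in>UNIV. ce$k) - (\<Sum>k\<in>UNIV. cs$k) = A / vs"
    using ss unfolding steady_state_def pi_w_def by simp
qed

(* The hypotheses on f(\<phi>_min)
   only guarantee existence of the steady state, which is assumed here. *)
theorem lemma4:
  fixes zv ce p :: "real^'n" and L :: "real^'n^'n"
    and A z zeta phi_min :: real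
  assumes N2: "CARD('n) \<ge> 2"
    and z_nz: "\<exists>k. zv$k \<noteq> 0"
    and ce_pos: "\<forall>k. ce$k > 0"
    and electroneutral: "(\<Sum>k\<in>UNIV. zv$k * ce$k) = 0"
    and A_pos: "A > 0"
    and L_sym: "transpose L = L"
    and L_pd: "\<forall>x. x \<noteq> 0 \<longrightarrow> x \<bullet> (L *v x) > 0"
    and zeta_pos: "zeta > 0"
  defines "q \<equiv> matrix_inv L *v p"
  shows
    "(\<forall>a v. (\<forall>k. a$k > 0) \<and> v > 0 \<longrightarrow> hessian_pos_def_at (Gt_a ce q A) (a, v)) \<and>
     convex_on {(a, v). (\<forall>k. a$k \<ge> 0) \<and> v > 0} (Gt_a ce q A) \<and>
     (\<forall>cs vs phis.
        (\<forall>psi. f_fun zv ce q phi_min \<le> f_fun zv ce q psi) \<longrightarrow>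
        f_fun zv ce q phi_min < 0 \<longrightarrow>
        steady_state zv ce A z L p cs vs phis \<longrightarrow>
        (cs, vs) \<in> Sbar zv z A \<and>
        (\<forall>c v. (c, v) \<in> Sbar zv z A \<and> (c, v) \<noteq> (cs, vs) \<longrightarrow>
                Gt_c ce q A cs vs < Gt_c ce q A c v))"
proof (intro conjI allI impI)
  show "hessian_pos_def_at (Gt_a ce q A) (a, v)" if "(\<forall>k. a$k > 0) \<and> v > 0" for a v
    using Gt_a_hessian_pos_def[OF ce_pos A_pos] that by blast
  show "convex_on {(a, v). (\<forall>k. a$k \<ge> 0) \<and> v > 0} (Gt_a ce q A)"
    using Gt_a_convex[OF ce_pos A_pos] .
next
  fix cs vs phis
  assume ss: "steady_state zv ce A z L p cs vs phis"
  note equilibrium = steady_state_equilibrium[OF L_pd ss, folded q_def]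
  show "(cs, vs) \<in> Sbar zv z A" by (rule equilibrium(2))
  show "Gt_c ce q A cs vs < Gt_c ce q A c v" if "(c, v) \<in> Sbar zv z A \<and> (c, v) \<noteq> (cs, vs)" for c v
    using Gt_c_strict_min[OF ce_pos A_pos equilibrium(1,3,4,2)] that by blast
qed

end
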